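(* Every concatenation-closed pseudovariety of semigroupoids is equidivisible.
   Context: Semigroupoids: graphs with associative partial multiplication $st$ defined iff the source of $s$ equals the range of $t$. A pseudovariety of semigroupoids (class of finite semigroupoids closed under divisors, finite direct products and finite coproducts) $\mathsf V$ is concatenation-closed if for every finite graph $A$ the $\mathsf V$-recognizable languages $L\subseteq E(A^+)$ (those with $L=\varphi^{-1}\varphi(L)$ for a homomorphism $\varphi\colon A^+\to F\in\mathsf V$, where $A^+$ is the free semigroupoid of nonempty paths) are closed under concatenation. A semigroupoid $S$ is equidivisible if whenever $uv=xy$ there is $t\in E(S^I)$ ($S^I$: local identities adjoined) with ($ut=x$ and $v=ty$) or ($xt=u$ and $y=tv$); $\mathsf V$ is equidivisible if the free pro-$\mathsf V$ semigroupoid $\overline{\Omega}_A\mathsf V$ is equidivisible for every finite graph $A$. *)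

theory Defs
  imports Main
begin

text \<open>The function gmult is only
  meaningful on composable pairs.\<close>

record ('v, 'e) graph =
  verts :: "'v set"
  edges :: "'e set"
  src   :: "'e \<Rightarrow> 'v"
  rng   :: "'e \<Rightarrow> 'v"

record ('v, 'e) sgd = "('v, 'e) graph" +
  gmult :: "'e \<Rightarrow> 'e \<Rightarrow> 'e"

definition is_graph :: "('v, 'e, 'z) graph_scheme \<Rightarrow> bool" where
  "is_graph G \<longleftrightarrow> (\<forall>e\<in>edges G. src G e \<in> verts G \<and> rng G e \<in> verts G)"

definition finite_graph :: "('v, 'e, 'z) graph_scheme \<Rightarrow> bool" where
  "finite_graph G \<longleftrightarrow> is_graph G \<and> finite (verts G) \<and> finite (edges G)"

definition is_sgd :: "('v, 'e) sgd \<Rightarrow> bool" where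
  "is_sgd S \<longleftrightarrow> is_graph S \<and>
     (\<forall>s\<in>edges S. \<forall>t\<in>edges S. src S s = rng S t \<longrightarrow>
        gmult S s t \<in> edges S \<and> src S (gmult S s t) = src S t \<and> rng S (gmult S s t) = rng S s) \<and>
     (\<forall>s\<in>edges S. \<forall>t\<in>edges S. \<forall>u\<in>edges S. src S s = rng S t \<and> src S t = rng S u \<longrightarrow>
        gmult S (gmult S s t) u = gmult S s (gmult S t u))"

definition finite_sgd :: "('v, 'e) sgd \<Rightarrow> bool" where
  "finite_sgd S \<longleftrightarrow> is_sgd S \<and> finite (verts S) \<and> finite (edges S)"

definition is_hom :: "('a, 'b) sgd \<Rightarrow> ('c, 'd) sgd \<Rightarrow> ('a \<Rightarrow> 'c) \<Rightarrow> ('b \<Rightarrow> 'd) \<Rightarrow> bool" where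
  "is_hom S T fv fe \<longleftrightarrow>
     (\<forall>v\<in>verts S. fv v \<in> verts T) \<and>
     (\<forall>e\<in>edges S. fe e \<in> edges T \<and> src T (fe e) = fv (src S e) \<and> rng T (fe e) = fv (rng S e)) \<and>
     (\<forall>s\<in>edges S. \<forall>t\<in>edges S. src S s = rng S t \<longrightarrow> fe (gmult S s t) = gmult T (fe s) (fe t))"

text \<open>Division (Tilson): S divides T iff there is a relational morphism
  (a vertex function and an edge relation with nonempty coterminal images,
  compatible with multiplication) which is injective, i.e. distinct coterminal
  edges have disjoint images.\<close>

definition divides :: "('a, 'b) sgd \<Rightarrow> ('c, 'd) sgd \<Rightarrow> bool" where
  "divides S T \<longleftrightarrow> (\<exists>(tv :: 'a \<Rightarrow> 'c) (te :: 'b \<Rightarrow> 'd set).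
     (\<forall>v\<in>verts S. tv v \<in> verts T) \<and>
     (\<forall>s\<in>edges S. te s \<noteq> {} \<and> te s \<subseteq> edges T \<and>
        (\<forall>t\<in>te s. src T t = tv (src S s) \<and> rng T t = tv (rng S s))) \<and>
     (\<forall>s\<in>edges S. \<forall>s'\<in>edges S. src S s = rng S s' \<longrightarrow>
        (\<forall>t\<in>te s. \<forall>t'\<in>te s'. gmult T t t' \<in> te (gmult S s s'))) \<and>
     (\<forall>s\<in>edges S. \<forall>s'\<in>edges S. s \<noteq> s' \<and> src S s = src S s' \<and> rng S s = rng S s' \<longrightarrow>
        te s \<inter> te s' = {}))"

definition sgd_prod :: "('a, 'b) sgd \<Rightarrow> ('c, 'd) sgd \<Rightarrow> ('a \<times> 'c, 'b \<times> 'd) sgd" where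
  "sgd_prod S T = \<lparr> verts = verts S \<times> verts T, edges = edges S \<times> edges T,
     src = (\<lambda>(s, t). (src S s, src T t)), rng = (\<lambda>(s, t). (rng S s, rng T t)),
     gmult = (\<lambda>(s, t) (s', t'). (gmult S s s', gmult T t t')) \<rparr>"

definition sgd_coprod :: "('a, 'b) sgd \<Rightarrow> ('c, 'd) sgd \<Rightarrow> ('a + 'c, 'b + 'd) sgd" where
  "sgd_coprod S T = \<lparr> verts = Inl ` verts S \<union> Inr ` verts T, edges = Inl ` edges S \<union> Inr ` edges T,
     src = case_sum (\<lambda>s. Inl (src S s)) (\<lambda>t. Inr (src T t)),
     rng = case_sum (\<lambda>s. Inl (rng S s)) (\<lambda>t. Inr (rng T t)),
     gmult = (\<lambda>x y. case (x, y) of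
                 (Inl s, Inl s') \<Rightarrow> Inl (gmult S s s')
               | (Inr t, Inr t') \<Rightarrow> Inr (gmult T t t')
               | _ \<Rightarrow> undefined) \<rparr>"

text \<open>The trivial semigroupoid (empty direct product): one vertex, one loop.\<close>

definition sgd_trivial :: "(unit, unit) sgd" where
  "sgd_trivial = \<lparr> verts = {()}, edges = {()}, src = (\<lambda>_. ()), rng = (\<lambda>_. ()),
     gmult = (\<lambda>_ _. ()) \<rparr>"

text \<open>A pseudovariety is a class of finite semigroupoids; every finite
  semigroupoid is isomorphic to one whose vertices and edges are natural
  numbers, so we represent the class by its members carried by nat.\<close>

definition pseudovariety :: "(nat, nat) sgd set \<Rightarrow> bool" where
  "pseudovariety V \<longleftrightarrow>
     (\<forall>S\<in>V. finite_sgd S) \<and>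
     (\<forall>S T. finite_sgd S \<and> T \<in> V \<and> divides S T \<longrightarrow> S \<in> V) \<and>
     (\<forall>R. finite_sgd R \<and> divides R sgd_trivial \<longrightarrow> R \<in> V) \<and>
     (\<forall>R S T. finite_sgd R \<and> S \<in> V \<and> T \<in> V \<and> divides R (sgd_prod S T) \<longrightarrow> R \<in> V) \<and>
     (\<forall>R S T. finite_sgd R \<and> S \<in> V \<and> T \<in> V \<and> divides R (sgd_coprod S T) \<longrightarrow> R \<in> V)"

text \<open>A^+: vertices of A, edges = nonempty paths, written as lists
  [a1,...,an] with src a_i = rng a_(i+1); the product is concatenation.\<close>

definition free_sgd :: "('v, 'e, 'z) graph_scheme \<Rightarrow> ('v, 'e list) sgd" where
  "free_sgd A = \<lparr> verts = verts A,
     edges = {w. w \<noteq> [] \<and> set w \<subseteq> edges A \<and>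
                 (\<forall>i. Suc i < length w \<longrightarrow> src A (w ! i) = rng A (w ! Suc i))},
     src = (\<lambda>w. src A (last w)), rng = (\<lambda>w. rng A (hd w)),
     gmult = (\<lambda>u v. u @ v) \<rparr>"

definition recognizable ::
  "(nat, nat) sgd set \<Rightarrow> ('v, 'e, 'z) graph_scheme \<Rightarrow> 'e list set \<Rightarrow> bool" where
  "recognizable V A L \<longleftrightarrow> L \<subseteq> edges (free_sgd A) \<and>
     (\<exists>F fv fe. F \<in> V \<and> is_hom (free_sgd A) F fv fe \<and>
        L = {w \<in> edges (free_sgd A). fe w \<in> fe ` L})"

definition concat :: "('v, 'e, 'z) graph_scheme \<Rightarrow> 'e list set \<Rightarrow> 'e list set \<Rightarrow> 'e list set" where
  "concat A L K = {gmult (free_sgd A) u v | u v. u \<in> L \<and> v \<in> K \<and>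
                     src (free_sgd A) u = rng (free_sgd A) v}"

text \<open>Concatenation-closed; finite graphs are taken up to isomorphism, i.e.
  carried by nat.\<close>

definition concat_closed :: "(nat, nat) sgd set \<Rightarrow> bool" where
  "concat_closed V \<longleftrightarrow> (\<forall>A :: (nat, nat) graph. finite_graph A \<longrightarrow>
     (\<forall>L K. recognizable V A L \<and> recognizable V A K \<longrightarrow> recognizable V A (concat A L K)))"

text \<open>Constructed as the projective limit of all homomorphisms from A^+ into
  members of V.  An edge is a triple (s, r, x): source vertex s, range vertex r
  of A, and a compatible family x assigning to each homomorphism
  phi : A^+ \<rightarrow> S (S in V) an edge of S (normalised to undefined on invalid
  indices).\<close>

type_synonym ('v, 'e) proidx = "(nat, nat) sgd \<times> ('v \<Rightarrow> nat) \<times> ('e list \<Rightarrow> nat)"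

definition valid_idx :: "(nat, nat) sgd set \<Rightarrow> ('v, 'e, 'z) graph_scheme \<Rightarrow> ('v, 'e) proidx \<Rightarrow> bool" where
  "valid_idx V A i \<longleftrightarrow> (case i of (S, fv, fe) \<Rightarrow> S \<in> V \<and> is_hom (free_sgd A) S fv fe)"

definition pro_elem ::
  "(nat, nat) sgd set \<Rightarrow> ('v, 'e, 'z) graph_scheme \<Rightarrow> 'v \<times> 'v \<times> (('v, 'e) proidx \<Rightarrow> nat) \<Rightarrow> bool" where
  "pro_elem V A p \<longleftrightarrow> (case p of (s, r, x) \<Rightarrow>
     s \<in> verts A \<and> r \<in> verts A \<and>
     (\<forall>i. \<not> valid_idx V A i \<longrightarrow> x i = undefined) \<and>
     (\<forall>S fv fe. valid_idx V A (S, fv, fe) \<longrightarrow>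
        x (S, fv, fe) \<in> edges S \<and> src S (x (S, fv, fe)) = fv s \<and> rng S (x (S, fv, fe)) = fv r) \<and>
     (\<forall>S fv fe T gv ge hv he. valid_idx V A (S, fv, fe) \<and> valid_idx V A (T, gv, ge) \<and>
        is_hom S T hv he \<and> (\<forall>v\<in>verts A. gv v = hv (fv v)) \<and>
        (\<forall>w\<in>edges (free_sgd A). ge w = he (fe w)) \<longrightarrow>
        x (T, gv, ge) = he (x (S, fv, fe))))"

definition free_pro ::
  "(nat, nat) sgd set \<Rightarrow> ('v, 'e, 'z) graph_scheme \<Rightarrow> ('v, 'v \<times> 'v \<times> (('v, 'e) proidx \<Rightarrow> nat)) sgd" where
  "free_pro V A = \<lparr> verts = verts A, edges = {p. pro_elem V A p},
     src = (\<lambda>(s, r, x). s), rng = (\<lambda>(s, r, x). r),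
     gmult = (\<lambda>(s, r, x) (s', r', y).
        (s', r, (\<lambda>i. if valid_idx V A i then gmult (fst i) (x i) (y i) else undefined))) \<rparr>"

text \<open>S^I: S with a local identity adjoined at each vertex (Inr v is the
  identity at v).\<close>

definition sgd_I :: "('v, 'e) sgd \<Rightarrow> ('v, 'e + 'v) sgd" where
  "sgd_I S = \<lparr> verts = verts S, edges = Inl ` edges S \<union> Inr ` verts S,
     src = case_sum (src S) (\<lambda>v. v), rng = case_sum (rng S) (\<lambda>v. v),
     gmult = (\<lambda>x y. case (x, y) of
                 (Inl s, Inl t) \<Rightarrow> Inl (gmult S s t)
               | (Inr _, _) \<Rightarrow> y
               | (Inl _, Inr _) \<Rightarrow> x) \<rparr>"

definition equidivisible :: "('v, 'e) sgd \<Rightarrow> bool" where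
  "equidivisible S \<longleftrightarrow>
     (\<forall>u\<in>edges S. \<forall>v\<in>edges S. \<forall>x\<in>edges S. \<forall>y\<in>edges S.
        src S u = rng S v \<and> src S x = rng S y \<and> gmult S u v = gmult S x y \<longrightarrow>
        (\<exists>t\<in>edges (sgd_I S).
           (src (sgd_I S) (Inl u) = rng (sgd_I S) t \<and> gmult (sgd_I S) (Inl u) t = Inl x \<and>
            src (sgd_I S) t = rng (sgd_I S) (Inl y) \<and> Inl v = gmult (sgd_I S) t (Inl y)) \<or>
           (src (sgd_I S) (Inl x) = rng (sgd_I S) t \<and> gmult (sgd_I S) (Inl x) t = Inl u \<and>
            src (sgd_I S) t = rng (sgd_I S) (Inl v) \<and> Inl y = gmult (sgd_I S) t (Inl v))))"

end

theory Submission
  imports Defs "HOL-Library.Nat_Bijection" "HOL-Analysis.Function_Topology" "HOL-Analysis.Product_Topology"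
begin

(* In a free pro-V semigroupoid, an element is a compatible family of values in the finite
   quotients phi : A^+ -> S of the free semigroupoid.  Given u v = x y, look at a single
   quotient phi that separates the vertices of A.  Each of its values is the image of a word, and
   the fibres L = phi^-1 phi(u) and K = phi^-1 phi(v) are V-recognizable; by concatenation closure so
   is L K, say via psi.  Choosing words for u, v, x, y that represent them simultaneously under phi
   and psi, the word for x y lies in L K, so it factors as a b with phi(a) = phi(u), phi(b) = phi(v).
   Equidivisibility of the free semigroupoid A^+ now yields the middle factor at phi.  Such local
   solutions are inherited along refinements of quotients, every finite set of quotients has a
   common separating refinement, and the local solution sets are closed in the compact product of
   the finite edge sets; hence a global middle factor exists. *)

lemma free_sgd_simps [simp]:
  "verts (free_sgd A) = verts A"
  "src (free_sgd A) w = src A (last w)"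
  "rng (free_sgd A) w = rng A (hd w)"
  "gmult (free_sgd A) u v = u @ v"
  by (simp_all add: free_sgd_def)

lemma edges_free_sgd_iff:
  "w \<in> edges (free_sgd A) \<longleftrightarrow>
     w \<noteq> [] \<and> set w \<subseteq> edges A \<and> successively (\<lambda>a b. src A a = rng A b) w"
  by (simp add: free_sgd_def successively_conv_nth)

lemma append_in_edges_free_sgd_iff:
  assumes "u \<noteq> []" "v \<noteq> []"
  shows "u @ v \<in> edges (free_sgd A) \<longleftrightarrow>
    u \<in> edges (free_sgd A) \<and> v \<in> edges (free_sgd A) \<and> src A (last u) = rng A (hd v)"
  using assms by (auto simp: edges_free_sgd_iff successively_append_iff)

lemma append_in_edges_free_sgd:
  assumes "u \<in> edges (free_sgd A)" "v \<in> edges (free_sgd A)" "src A (last u) = rng A (hd v)"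
  shows "u @ v \<in> edges (free_sgd A)"
  using assms by (auto simp: edges_free_sgd_iff successively_append_iff)

lemma edges_free_sgd_ends:
  assumes "is_graph A" "w \<in> edges (free_sgd A)"
  shows "src A (last w) \<in> verts A" "rng A (hd w) \<in> verts A"
proof -
  have "last w \<in> edges A" "hd w \<in> edges A"
    using assms(2) last_in_set[of w] hd_in_set[of w] unfolding edges_free_sgd_iff by auto
  then show "src A (last w) \<in> verts A" "rng A (hd w) \<in> verts A"
    using assms(1) unfolding is_graph_def by auto
qed

lemma is_hom_edge:
  assumes "is_hom S T fv fe" "e \<in> edges S"
  shows "fe e \<in> edges T" "src T (fe e) = fv (src S e)" "rng T (fe e) = fv (rng S e)"
  using assms unfolding is_hom_def by auto

lemma is_hom_gmult:
  assumes "is_hom S T fv fe" "a \<in> edges S" "b \<in> edges S" "src S a = rng S b"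
  shows "fe (gmult S a b) = gmult T (fe a) (fe b)"
  using assms unfolding is_hom_def by auto

lemma is_hom_comp:
  assumes "is_hom S T fv fe" "is_hom T U gv ge"
  shows "is_hom S U (gv \<circ> fv) (ge \<circ> fe)"
  using assms unfolding is_hom_def by auto

text \<open>The direct product, with vertices and edges coded into \<^typ>\<open>nat\<close>, so that it can belong to
  a class of semigroupoids carried by \<^typ>\<open>nat\<close>.\<close>

definition sgd_prod_nat :: "(nat, nat) sgd \<Rightarrow> (nat, nat) sgd \<Rightarrow> (nat, nat) sgd" where
  "sgd_prod_nat S T = \<lparr> verts = prod_encode ` (verts S \<times> verts T),
     edges = prod_encode ` (edges S \<times> edges T),
     src = (\<lambda>e. case prod_decode e of (a, b) \<Rightarrow> prod_encode (src S a, src T b)),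
     rng = (\<lambda>e. case prod_decode e of (a, b) \<Rightarrow> prod_encode (rng S a, rng T b)),
     gmult = (\<lambda>e e'. case (prod_decode e, prod_decode e') of ((a, b), (a', b')) \<Rightarrow>
        prod_encode (gmult S a a', gmult T b b')) \<rparr>"

lemma finite_sgd_sgd_prod_nat:
  assumes "finite_sgd S" "finite_sgd T"
  shows "finite_sgd (sgd_prod_nat S T)"
  using assms unfolding finite_sgd_def is_sgd_def is_graph_def sgd_prod_nat_def
  by (auto simp: prod_encode_eq)

lemma divides_sgd_prod_nat: "divides (sgd_prod_nat S T) (sgd_prod S T)"
  unfolding divides_def sgd_prod_nat_def sgd_prod_def
  by (rule exI[of _ prod_decode], rule exI[of _ "\<lambda>e. {prod_decode e}"]) (auto split: prod.splits)

lemma is_hom_sgd_prod_nat_fst: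
  "is_hom (sgd_prod_nat S T) S (\<lambda>v. fst (prod_decode v)) (\<lambda>e. fst (prod_decode e))"
  unfolding is_hom_def sgd_prod_nat_def by auto

lemma is_hom_sgd_prod_nat_snd:
  "is_hom (sgd_prod_nat S T) T (\<lambda>v. snd (prod_decode v)) (\<lambda>e. snd (prod_decode e))"
  unfolding is_hom_def sgd_prod_nat_def by auto

lemma is_hom_sgd_prod_nat_pair:
  assumes "is_hom F S fv fe" "is_hom F T gv ge"
  shows "is_hom F (sgd_prod_nat S T) (\<lambda>v. prod_encode (fv v, gv v)) (\<lambda>e. prod_encode (fe e, ge e))"
  using assms unfolding is_hom_def sgd_prod_nat_def by auto

text \<open>Divides the trivial semigroupoid, hence lies in every pseudovariety; homomorphisms into it
  separate vertices.\<close>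

definition chaotic_sgd :: "nat set \<Rightarrow> (nat, nat) sgd" where
  "chaotic_sgd C = \<lparr> verts = C, edges = prod_encode ` (C \<times> C),
     src = (\<lambda>e. fst (prod_decode e)), rng = (\<lambda>e. snd (prod_decode e)),
     gmult = (\<lambda>e e'. prod_encode (fst (prod_decode e'), snd (prod_decode e))) \<rparr>"

lemma finite_sgd_chaotic_sgd: "finite C \<Longrightarrow> finite_sgd (chaotic_sgd C)"
  unfolding finite_sgd_def is_sgd_def is_graph_def chaotic_sgd_def by auto

lemma divides_chaotic_sgd_trivial: "divides (chaotic_sgd C) sgd_trivial"
  unfolding divides_def sgd_trivial_def chaotic_sgd_def
  by (rule exI[of _ "\<lambda>_. ()"], rule exI[of _ "\<lambda>_. {()}"]) auto

lemma is_hom_chaotic_sgd: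
  assumes "is_graph A" "cv ` verts A \<subseteq> C"
  shows "is_hom (free_sgd A) (chaotic_sgd C) cv (\<lambda>w. prod_encode (cv (src A (last w)), cv (rng A (hd w))))"
  using assms edges_free_sgd_ends[OF assms(1)]
  unfolding is_hom_def chaotic_sgd_def by (auto simp: edges_free_sgd_iff image_subset_iff intro!: imageI)

definition hom_image_sgd ::
  "(nat, nat) sgd \<Rightarrow> ('v \<Rightarrow> nat) \<Rightarrow> ('e list \<Rightarrow> nat) \<Rightarrow> ('v, 'e, 'z) graph_scheme \<Rightarrow> (nat, nat) sgd" where
  "hom_image_sgd S fv fe A = \<lparr> verts = fv ` verts A, edges = fe ` edges (free_sgd A),
     src = src S, rng = rng S, gmult = gmult S \<rparr>"

lemma finite_sgd_hom_image_sgd: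
  assumes "finite_sgd S" "is_hom (free_sgd A) S fv fe" "inj_on fv (verts A)" "is_graph A"
  shows "finite_sgd (hom_image_sgd S fv fe A)"
proof -
  have closed: "gmult S (fe u) (fe v) \<in> fe ` edges (free_sgd A)"
    if uv: "u \<in> edges (free_sgd A)" "v \<in> edges (free_sgd A)" and "src S (fe u) = rng S (fe v)"
    for u v
  proof -
    have "src A (last u) = rng A (hd v)"
      using that is_hom_edge[OF assms(2)] edges_free_sgd_ends[OF assms(4)] assms(3)
      by (auto dest: inj_onD)
    then have "u @ v \<in> edges (free_sgd A)" "fe (u @ v) = gmult S (fe u) (fe v)"
      using uv is_hom_gmult[OF assms(2) uv] append_in_edges_free_sgd by auto
    then show ?thesis by (metis image_eqI)
  qed
  have "fv ` verts A \<subseteq> verts S" "fe ` edges (free_sgd A) \<subseteq> edges S"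
    using assms(2) unfolding is_hom_def by auto
  then show ?thesis
    using assms(1) closed is_hom_edge[OF assms(2)] edges_free_sgd_ends[OF assms(4)]
    unfolding finite_sgd_def is_sgd_def is_graph_def hom_image_sgd_def
    by (auto intro: finite_subset)
qed

lemma divides_hom_image_sgd:
  assumes "is_hom (free_sgd A) S fv fe"
  shows "divides (hom_image_sgd S fv fe A) S"
  using assms unfolding divides_def is_hom_def hom_image_sgd_def
  by (intro exI[of _ id] exI[of _ "\<lambda>e. {e}"]) auto

lemma pseudovariety_finite_sgd: "pseudovariety V \<Longrightarrow> S \<in> V \<Longrightarrow> finite_sgd S"
  unfolding pseudovariety_def by blast

lemma pseudovariety_divisor: "pseudovariety V \<Longrightarrow> finite_sgd R \<Longrightarrow> divides R S \<Longrightarrow> S \<in> V \<Longrightarrow> R \<in> V"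
  unfolding pseudovariety_def by blast

lemma pseudovariety_chaotic_sgd:
  assumes "pseudovariety V" "finite C"
  shows "chaotic_sgd C \<in> V"
proof -
  have "\<forall>R. finite_sgd R \<and> divides R sgd_trivial \<longrightarrow> R \<in> V"
    using assms(1) unfolding pseudovariety_def by (elim conjE)
  then show ?thesis using finite_sgd_chaotic_sgd[OF assms(2)] divides_chaotic_sgd_trivial by blast
qed

lemma pseudovariety_sgd_prod_nat:
  assumes "pseudovariety V" "S \<in> V" "T \<in> V"
  shows "sgd_prod_nat S T \<in> V"
proof -
  have "\<forall>R S T. finite_sgd R \<and> S \<in> V \<and> T \<in> V \<and> divides R (sgd_prod S T) \<longrightarrow> R \<in> V"
    using assms(1) unfolding pseudovariety_def by (elim conjE)
  moreover have "finite_sgd (sgd_prod_nat S T)"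
    using assms pseudovariety_finite_sgd finite_sgd_sgd_prod_nat by blast
  ultimately show ?thesis using assms(2,3) divides_sgd_prod_nat by blast
qed

section \<open>Indices of the projective limit\<close>

lemma valid_idx_iff: "valid_idx V A i \<longleftrightarrow> fst i \<in> V \<and> is_hom (free_sgd A) (fst i) (fst (snd i)) (snd (snd i))"
  by (simp add: valid_idx_def split: prod.splits)

definition idx_hom :: "(nat, nat) sgd set \<Rightarrow> ('v, 'e, 'z) graph_scheme \<Rightarrow> ('v, 'e) proidx \<Rightarrow> ('v, 'e) proidx \<Rightarrow>
    (nat \<Rightarrow> nat) \<Rightarrow> (nat \<Rightarrow> nat) \<Rightarrow> bool" where
  "idx_hom V A k i hv he \<longleftrightarrow> valid_idx V A k \<and> valid_idx V A i \<and> is_hom (fst k) (fst i) hv he \<and>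
     (\<forall>v\<in>verts A. fst (snd i) v = hv (fst (snd k) v)) \<and>
     (\<forall>w\<in>edges (free_sgd A). snd (snd i) w = he (snd (snd k) w))"

definition idx_refines :: "(nat, nat) sgd set \<Rightarrow> ('v, 'e, 'z) graph_scheme \<Rightarrow> ('v, 'e) proidx \<Rightarrow> ('v, 'e) proidx \<Rightarrow> bool" where
  "idx_refines V A k i \<longleftrightarrow> (\<exists>hv he. idx_hom V A k i hv he)"

definition separating_idx :: "(nat, nat) sgd set \<Rightarrow> ('v, 'e, 'z) graph_scheme \<Rightarrow> ('v, 'e) proidx \<Rightarrow> bool" where
  "separating_idx V A k \<longleftrightarrow> valid_idx V A k \<and> inj_on (fst (snd k)) (verts A)"

lemma idx_hom_comp:
  "idx_hom V A k j hv he \<Longrightarrow> idx_hom V A j i gv ge \<Longrightarrow> idx_hom V A k i (gv \<circ> hv) (ge \<circ> he)"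
  unfolding idx_hom_def using is_hom_comp by fastforce

lemma idx_refines_trans: "idx_refines V A k j \<Longrightarrow> idx_refines V A j i \<Longrightarrow> idx_refines V A k i"
  unfolding idx_refines_def using idx_hom_comp by blast

definition idx_prod :: "('v, 'e) proidx \<Rightarrow> ('v, 'e) proidx \<Rightarrow> ('v, 'e) proidx" where
  "idx_prod k j = (sgd_prod_nat (fst k) (fst j),
     \<lambda>v. prod_encode (fst (snd k) v, fst (snd j) v), \<lambda>w. prod_encode (snd (snd k) w, snd (snd j) w))"

lemma valid_idx_prod:
  "pseudovariety V \<Longrightarrow> valid_idx V A k \<Longrightarrow> valid_idx V A j \<Longrightarrow> valid_idx V A (idx_prod k j)"
  unfolding valid_idx_iff idx_prod_def by (simp add: pseudovariety_sgd_prod_nat is_hom_sgd_prod_nat_pair)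

lemma idx_hom_prod_fst:
  "pseudovariety V \<Longrightarrow> valid_idx V A k \<Longrightarrow> valid_idx V A j \<Longrightarrow>
    idx_hom V A (idx_prod k j) k (\<lambda>v. fst (prod_decode v)) (\<lambda>e. fst (prod_decode e))"
  unfolding idx_hom_def using valid_idx_prod[of V A k j]
  by (simp add: idx_prod_def is_hom_sgd_prod_nat_fst)

lemma idx_hom_prod_snd:
  "pseudovariety V \<Longrightarrow> valid_idx V A k \<Longrightarrow> valid_idx V A j \<Longrightarrow>
    idx_hom V A (idx_prod k j) j (\<lambda>v. snd (prod_decode v)) (\<lambda>e. snd (prod_decode e))"
  unfolding idx_hom_def using valid_idx_prod[of V A k j]
  by (simp add: idx_prod_def is_hom_sgd_prod_nat_snd)

lemma separating_idx_prod:
  "pseudovariety V \<Longrightarrow> separating_idx V A k \<Longrightarrow> valid_idx V A j \<Longrightarrow> separating_idx V A (idx_prod k j)"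
  unfolding separating_idx_def using valid_idx_prod[of V A k j]
  by (auto simp: idx_prod_def inj_on_def)

lemma exists_separating_idx:
  assumes "pseudovariety V" "finite_graph A"
  shows "\<exists>k. separating_idx V A k"
proof -
  obtain cv :: "'a \<Rightarrow> nat" where cv: "inj_on cv (verts A)"
    using assms(2) unfolding finite_graph_def by (meson finite_imp_inj_to_nat_seg)
  have "is_graph A" "finite (cv ` verts A)" using assms(2) unfolding finite_graph_def by auto
  then have "valid_idx V A (chaotic_sgd (cv ` verts A), cv,
      \<lambda>w. prod_encode (cv (src A (last w)), cv (rng A (hd w))))"
    unfolding valid_idx_def using pseudovariety_chaotic_sgd[OF assms(1)] is_hom_chaotic_sgd[OF _ order_refl] by simp
  then show ?thesis using cv unfolding separating_idx_def by auto
qed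

lemma exists_common_refinement:
  assumes "pseudovariety V" "finite_graph A" "finite F" "F \<subseteq> {i. valid_idx V A i}"
  shows "\<exists>k. separating_idx V A k \<and> (\<forall>i\<in>F. idx_refines V A k i)"
  using assms(3,4)
proof (induction F rule: finite_induct)
  case empty
  then show ?case using exists_separating_idx[OF assms(1,2)] by simp
next
  case (insert j F)
  then obtain k where k: "separating_idx V A k" "\<forall>i\<in>F. idx_refines V A k i" by auto
  have j: "valid_idx V A j" using insert.prems by simp
  have "idx_refines V A (idx_prod k j) k" "idx_refines V A (idx_prod k j) j"
    using idx_hom_prod_fst[OF assms(1) _ j] idx_hom_prod_snd[OF assms(1) _ j] k(1)
    unfolding idx_refines_def separating_idx_def by blast+
  then show ?case
    using separating_idx_prod[OF assms(1) k(1) j] k(2) idx_refines_trans by blast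
qed

type_synonym ('v, 'e) profam = "('v, 'e) proidx \<Rightarrow> nat"

lemma pro_elem_iff:
  "pro_elem V A (s, r, x) \<longleftrightarrow> s \<in> verts A \<and> r \<in> verts A \<and>
     (\<forall>i. \<not> valid_idx V A i \<longrightarrow> x i = undefined) \<and>
     (\<forall>i. valid_idx V A i \<longrightarrow>
        x i \<in> edges (fst i) \<and> src (fst i) (x i) = fst (snd i) s \<and> rng (fst i) (x i) = fst (snd i) r) \<and>
     (\<forall>k i hv he. idx_hom V A k i hv he \<longrightarrow> x i = he (x k))"
  unfolding pro_elem_def idx_hom_def by (simp add: split_paired_All)

lemma pro_elem_verts:
  "pro_elem V A (s, r, x) \<Longrightarrow> s \<in> verts A" "pro_elem V A (s, r, x) \<Longrightarrow> r \<in> verts A"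
  unfolding pro_elem_iff by blast+

lemma pro_elem_undefined: "pro_elem V A (s, r, x) \<Longrightarrow> \<not> valid_idx V A i \<Longrightarrow> x i = undefined"
  unfolding pro_elem_iff by blast

lemma pro_elem_edge:
  assumes "pro_elem V A (s, r, x)" "valid_idx V A i"
  shows "x i \<in> edges (fst i)" "src (fst i) (x i) = fst (snd i) s" "rng (fst i) (x i) = fst (snd i) r"
  using assms unfolding pro_elem_iff by blast+

lemma pro_elem_idx_hom: "pro_elem V A (s, r, x) \<Longrightarrow> idx_hom V A k i hv he \<Longrightarrow> x i = he (x k)"
  unfolding pro_elem_iff by blast

definition word_fam :: "(nat, nat) sgd set \<Rightarrow> ('v, 'e, 'z) graph_scheme \<Rightarrow> 'e list \<Rightarrow> ('v, 'e) profam" where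
  "word_fam V A w = (\<lambda>i. if valid_idx V A i then snd (snd i) w else undefined)"

lemma pro_elem_word_fam:
  assumes "is_graph A" "w \<in> edges (free_sgd A)"
  shows "pro_elem V A (src A (last w), rng A (hd w), word_fam V A w)"
  unfolding pro_elem_iff
proof (intro conjI allI impI)
  fix i assume "valid_idx V A i"
  then show "word_fam V A w i \<in> edges (fst i)"
    "src (fst i) (word_fam V A w i) = fst (snd i) (src A (last w))"
    "rng (fst i) (word_fam V A w i) = fst (snd i) (rng A (hd w))"
    using is_hom_edge[OF _ assms(2)] unfolding valid_idx_iff word_fam_def by auto
next
  fix k i hv he assume "idx_hom V A k i hv he"
  then show "word_fam V A w i = he (word_fam V A w k)"
    using assms(2) unfolding idx_hom_def word_fam_def by simp
qed (use edges_free_sgd_ends[OF assms] in \<open>auto simp: word_fam_def\<close>)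

lemma separating_idx_word_ends:
  assumes "is_graph A" "separating_idx V A k" "pro_elem V A (s, r, x)"
    "w \<in> edges (free_sgd A)" "snd (snd k) w = x k"
  shows "src A (last w) = s" "rng A (hd w) = r"
proof -
  obtain S fv fe where k: "k = (S, fv, fe)" by (cases k)
  with assms(2) have hom: "is_hom (free_sgd A) S fv fe" and "inj_on fv (verts A)" "valid_idx V A k"
    unfolding separating_idx_def valid_idx_iff by auto
  then have "fv (src A (last w)) = fv s" "fv (rng A (hd w)) = fv r"
    using pro_elem_edge[OF assms(3)] is_hom_edge[OF hom assms(4)] assms(5) k by auto
  then show "src A (last w) = s" "rng A (hd w) = r"
    using \<open>inj_on _ _\<close> edges_free_sgd_ends[OF assms(1,4)] pro_elem_verts[OF assms(3)]
    by (auto dest: inj_onD)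
qed

text \<open>The image of \<open>A\<^sup>+\<close> under a separating index is itself a member of \<open>V\<close>; compatibility with
  its inclusion shows that every value at a separating index is the value of a word.\<close>

lemma separating_idx_word_rep:
  assumes "pseudovariety V" "is_graph A" "separating_idx V A k" "pro_elem V A (s, r, x)"
  shows "\<exists>w\<in>edges (free_sgd A). snd (snd k) w = x k"
proof -
  obtain S fv fe where k: "k = (S, fv, fe)" by (cases k)
  with assms(3) have "S \<in> V" and hom: "is_hom (free_sgd A) S fv fe" and "inj_on fv (verts A)"
    unfolding separating_idx_def valid_idx_iff by auto
  let ?I = "hom_image_sgd S fv fe A"
  have "finite_sgd ?I"
    using finite_sgd_hom_image_sgd pseudovariety_finite_sgd assms(1,2) \<open>S \<in> V\<close> hom \<open>inj_on fv _\<close> by blast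
  then have "?I \<in> V"
    using pseudovariety_divisor[OF assms(1) _ divides_hom_image_sgd[OF hom] \<open>S \<in> V\<close>] by blast
  moreover have "is_hom (free_sgd A) ?I fv fe" "is_hom ?I S id id"
    using hom unfolding is_hom_def hom_image_sgd_def by auto
  ultimately have hom_k: "idx_hom V A (?I, fv, fe) k id id"
    using k assms(3) unfolding idx_hom_def separating_idx_def valid_idx_iff by simp
  then have "x k = x (?I, fv, fe)" "valid_idx V A (?I, fv, fe)"
    using pro_elem_idx_hom[OF assms(4) hom_k] unfolding idx_hom_def by simp_all
  then have "x k \<in> fe ` edges (free_sgd A)"
    using pro_elem_edge(1)[OF assms(4), of "(?I, fv, fe)"] by (simp add: hom_image_sgd_def)
  then show ?thesis using k by auto
qed

lemma separating_idx_common_word_rep: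
  assumes "pseudovariety V" "is_graph A" "separating_idx V A k" "valid_idx V A j" "pro_elem V A (s, r, x)"
  shows "\<exists>w\<in>edges (free_sgd A). snd (snd k) w = x k \<and> snd (snd j) w = x j \<and>
    src A (last w) = s \<and> rng A (hd w) = r"
proof -
  let ?p = "idx_prod k j"
  have k: "valid_idx V A k" using assms(3) unfolding separating_idx_def by simp
  obtain w where w: "w \<in> edges (free_sgd A)" "snd (snd ?p) w = x ?p"
    using separating_idx_word_rep[OF assms(1,2) separating_idx_prod[OF assms(1,3,4)] assms(5)] by blast
  have "x k = fst (prod_decode (x ?p))" "x j = snd (prod_decode (x ?p))"
    using pro_elem_idx_hom[OF assms(5)] idx_hom_prod_fst[OF assms(1) k assms(4)]
      idx_hom_prod_snd[OF assms(1) k assms(4)] by auto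
  then have "snd (snd k) w = x k" "snd (snd j) w = x j"
    using w(2)[symmetric] by (simp_all add: idx_prod_def)
  then show ?thesis
    using w(1) separating_idx_word_ends[OF assms(2,3,5) w(1)] by blast
qed

section \<open>Concatenation closure for graphs of any type\<close>

definition graph_hom ::
  "('a, 'b, 'z) graph_scheme \<Rightarrow> ('c, 'd, 'y) graph_scheme \<Rightarrow> ('a \<Rightarrow> 'c) \<Rightarrow> ('b \<Rightarrow> 'd) \<Rightarrow> bool" where
  "graph_hom A B cv ce \<longleftrightarrow> (\<forall>v\<in>verts A. cv v \<in> verts B) \<and>
     (\<forall>e\<in>edges A. ce e \<in> edges B \<and> src B (ce e) = cv (src A e) \<and> rng B (ce e) = cv (rng A e))"

lemma map_in_edges_free_sgd:
  assumes "graph_hom A B cv ce" "w \<in> edges (free_sgd A)"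
  shows "map ce w \<in> edges (free_sgd B)"
    "src B (last (map ce w)) = cv (src A (last w))" "rng B (hd (map ce w)) = cv (rng A (hd w))"
proof -
  have w: "w \<noteq> []" "set w \<subseteq> edges A" "successively (\<lambda>a b. src A a = rng A b) w"
    using assms(2) unfolding edges_free_sgd_iff by auto
  have "successively (\<lambda>a b. src B (ce a) = rng B (ce b)) w"
    using w(3) by (rule successively_mono) (use assms(1) w(2) in \<open>force simp: graph_hom_def subset_iff\<close>)
  then show "map ce w \<in> edges (free_sgd B)"
    using w assms(1) unfolding edges_free_sgd_iff graph_hom_def by (auto simp: successively_map)
  have "last w \<in> edges A" "hd w \<in> edges A" using w(1,2) by auto
  then show "src B (last (map ce w)) = cv (src A (last w))" "rng B (hd (map ce w)) = cv (rng A (hd w))"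
    using w(1) assms(1) unfolding graph_hom_def by (simp_all add: last_map hd_map)
qed

lemma is_hom_free_sgd_map:
  assumes "graph_hom A B cv ce"
  shows "is_hom (free_sgd A) (free_sgd B) cv (map ce)"
  using assms map_in_edges_free_sgd[OF assms] unfolding is_hom_def graph_hom_def by simp

lemma recognizable_pullback:
  assumes "graph_hom A B cv ce" "recognizable V B L"
  shows "recognizable V A {w \<in> edges (free_sgd A). map ce w \<in> L}"
proof -
  obtain F fv fe where F: "F \<in> V" "is_hom (free_sgd B) F fv fe"
    and L: "L = {w \<in> edges (free_sgd B). fe w \<in> fe ` L}"
    using assms(2) unfolding recognizable_def by blast
  let ?L = "{w \<in> edges (free_sgd A). map ce w \<in> L}"
  have "?L = {w \<in> edges (free_sgd A). (fe \<circ> map ce) w \<in> (fe \<circ> map ce) ` ?L}"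
    using map_in_edges_free_sgd(1)[OF assms(1)] by (subst (1 2) L) auto
  then show ?thesis
    using F(1) is_hom_comp[OF is_hom_free_sgd_map[OF assms(1)] F(2)]
    unfolding recognizable_def by blast
qed

lemma concat_pullback:
  assumes AB: "graph_hom A B cv ce" and BA: "graph_hom B A dv de"
    and inv: "\<And>w. w \<in> edges (free_sgd A) \<Longrightarrow> map de (map ce w) = w"
    and "L \<subseteq> edges (free_sgd A)" "K \<subseteq> edges (free_sgd A)"
  shows "{w \<in> edges (free_sgd A). map ce w \<in> concat B
      {u \<in> edges (free_sgd B). map de u \<in> L} {v \<in> edges (free_sgd B). map de v \<in> K}} = concat A L K"
proof (intro equalityI subsetI)
  fix w assume "w \<in> {w \<in> edges (free_sgd A). map ce w \<in> concat B
      {u \<in> edges (free_sgd B). map de u \<in> L} {v \<in> edges (free_sgd B). map de v \<in> K}}"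
  then obtain u v where w: "w \<in> edges (free_sgd A)" "map ce w = u @ v"
    and uv: "u \<in> edges (free_sgd B)" "v \<in> edges (free_sgd B)" "map de u \<in> L" "map de v \<in> K"
    and "src B (last u) = rng B (hd v)"
    unfolding concat_def by auto
  then have "src A (last (map de u)) = rng A (hd (map de v))"
    using map_in_edges_free_sgd[OF BA] by (metis assms(4,5) subsetD)
  moreover have "w = map de u @ map de v" using inv[OF w(1)] w(2) by simp
  ultimately show "w \<in> concat A L K" using uv unfolding concat_def by auto
next
  fix w assume "w \<in> concat A L K"
  then obtain u v where w: "w = u @ v" "u \<in> L" "v \<in> K" "src A (last u) = rng A (hd v)"
    unfolding concat_def by auto
  have uv: "u \<in> edges (free_sgd A)" "v \<in> edges (free_sgd A)" using w assms(4,5) by auto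
  have "w \<in> edges (free_sgd A)" using append_in_edges_free_sgd[OF uv w(4)] w(1) by simp
  moreover have "src B (last (map ce u)) = rng B (hd (map ce v))"
    using map_in_edges_free_sgd[OF AB uv(1)] map_in_edges_free_sgd[OF AB uv(2)] w(4) by simp
  moreover have "map ce u \<in> {u \<in> edges (free_sgd B). map de u \<in> L}"
    "map ce v \<in> {v \<in> edges (free_sgd B). map de v \<in> K}"
    using map_in_edges_free_sgd(1)[OF AB] uv inv w(2,3) by auto
  ultimately show "w \<in> {w \<in> edges (free_sgd A). map ce w \<in> concat B
      {u \<in> edges (free_sgd B). map de u \<in> L} {v \<in> edges (free_sgd B). map de v \<in> K}}"
    unfolding concat_def using w(1) by force
qed

lemma concat_closed_recognizable:
  fixes A :: "('v, 'e) graph"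
  assumes "concat_closed V" "finite_graph A" "recognizable V A L" "recognizable V A K"
  shows "recognizable V A (concat A L K)"
proof -
  have A: "is_graph A" "finite (verts A)" "finite (edges A)"
    using assms(2) unfolding finite_graph_def by auto
  obtain cv :: "'v \<Rightarrow> nat" where cv: "inj_on cv (verts A)"
    using A(2) by (meson finite_imp_inj_to_nat_seg)
  obtain ce :: "'e \<Rightarrow> nat" where ce: "inj_on ce (edges A)"
    using A(3) by (meson finite_imp_inj_to_nat_seg)
  define dv where "dv = inv_into (verts A) cv"
  define de where "de = inv_into (edges A) ce"
  define B :: "(nat, nat) graph" where "B = \<lparr> verts = cv ` verts A, edges = ce ` edges A,
     src = cv \<circ> src A \<circ> de, rng = cv \<circ> rng A \<circ> de \<rparr>"
  have de: "\<And>e. e \<in> edges A \<Longrightarrow> de (ce e) = e" unfolding de_def using ce by simp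
  have "finite_graph B"
    using A unfolding finite_graph_def is_graph_def B_def by (simp add: de)
  have AB: "graph_hom A B cv ce" unfolding graph_hom_def B_def by (simp add: de)
  have BA: "graph_hom B A dv de"
    using A(1) unfolding graph_hom_def B_def is_graph_def dv_def by (simp add: de inv_into_into cv)
  have inv: "\<And>w. w \<in> edges (free_sgd A) \<Longrightarrow> map de (map ce w) = w"
    unfolding edges_free_sgd_iff by (auto simp: de subset_iff intro: map_idI)
  have "recognizable V B {u \<in> edges (free_sgd B). map de u \<in> L}"
    "recognizable V B {v \<in> edges (free_sgd B). map de v \<in> K}"
    using recognizable_pullback[OF BA] assms(3,4) by blast+
  then have "recognizable V B (concat B {u \<in> edges (free_sgd B). map de u \<in> L}
      {v \<in> edges (free_sgd B). map de v \<in> K})"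
    using assms(1) \<open>finite_graph B\<close> unfolding concat_closed_def by blast
  from recognizable_pullback[OF AB this] show ?thesis
    using concat_pullback[OF AB BA inv] assms(3,4) unfolding recognizable_def by simp
qed

lemma recognizable_fiber:
  assumes "valid_idx V A k"
  shows "recognizable V A {w \<in> edges (free_sgd A). snd (snd k) w = c}"
proof -
  let ?L = "{w \<in> edges (free_sgd A). snd (snd k) w = c}"
  have "?L = {w \<in> edges (free_sgd A). snd (snd k) w \<in> snd (snd k) ` ?L}" by auto
  then show ?thesis using assms unfolding recognizable_def valid_idx_iff by blast
qed

section \<open>Compactness\<close>

lemma binary_constraints_compactness:
  fixes F :: "'i \<Rightarrow> 'a set" and C :: "('i \<times> 'i \<times> ('a \<Rightarrow> 'a \<Rightarrow> bool)) set"
  assumes fin: "\<And>i. i \<in> I \<Longrightarrow> finite (F i)"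
    and C: "\<And>i k R. (i, k, R) \<in> C \<Longrightarrow> i \<in> I \<and> k \<in> I"
    and sat: "\<And>G. finite G \<Longrightarrow> G \<subseteq> C \<Longrightarrow> \<exists>f\<in>PiE I F. \<forall>(i, k, R)\<in>G. R (f i) (f k)"
  shows "\<exists>f\<in>PiE I F. \<forall>(i, k, R)\<in>C. R (f i) (f k)"
proof (cases "C = {}")
  case True
  then show ?thesis using sat[of "{}"] by simp
next
  case False
  let ?X = "product_topology (\<lambda>i. discrete_topology (F i)) I"
  define K where "K c = {f \<in> PiE I F. case c of (i, k, R) \<Rightarrow> R (f i) (f k)}" for c
  have "compact_space ?X"
    using fin by (simp add: compact_space_product_topology compact_space_discrete_topology)
  have "closedin ?X (K (i, k, R))" if "(i, k, R) \<in> C" for i k R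
  proof -
    have "i \<in> I" "k \<in> I" using C[OF that] by auto
    then have "continuous_map ?X (discrete_topology (F i \<times> F k)) (\<lambda>f. (f i, f k))"
      unfolding prod_topology_discrete_topology
      by (intro continuous_map_pairedI continuous_map_product_projection)
    then have "closedin ?X {f \<in> topspace ?X. (f i, f k) \<in> {(a, b) \<in> F i \<times> F k. R a b}}"
      by (rule closedin_continuous_map_preimage) auto
    moreover have "{f \<in> topspace ?X. (f i, f k) \<in> {(a, b) \<in> F i \<times> F k. R a b}} = K (i, k, R)"
      using \<open>i \<in> I\<close> \<open>k \<in> I\<close> unfolding K_def by (auto simp: PiE_iff)
    ultimately show ?thesis by simp
  qed
  then have closed: "\<forall>D\<in>K ` C. closedin ?X D" by fast
  have fip: "\<forall>\<F>. finite \<F> \<and> \<F> \<subseteq> K ` C \<longrightarrow> \<Inter> \<F> \<noteq> {}"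
  proof (intro allI impI, elim conjE)
    fix \<F> assume "finite \<F>" "\<F> \<subseteq> K ` C"
    then obtain G where G: "G \<subseteq> C" "finite G" "\<F> = K ` G"
      using finite_subset_image by blast
    then obtain f where "f \<in> PiE I F" "\<forall>(i, k, R)\<in>G. R (f i) (f k)" using sat by blast
    then have "f \<in> \<Inter> \<F>" unfolding G(3) K_def by auto
    then show "\<Inter> \<F> \<noteq> {}" by blast
  qed
  have "\<Inter> (K ` C) \<noteq> {}"
    by (rule compact_space_fip[THEN iffD1, rule_format, OF \<open>compact_space ?X\<close> conjI[OF closed fip]])
  then obtain f where "\<forall>c\<in>C. f \<in> K c" by blast
  then show ?thesis using False unfolding K_def by fast
qed

text \<open>Membership in the free pro-V semigroupoid as a system of constraints, each on at most two
  coordinates, so that \<open>binary_constraints_compactness\<close> applies.\<close>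

definition pro_constraints :: "(nat, nat) sgd set \<Rightarrow> ('v, 'e, 'z) graph_scheme \<Rightarrow> 'v \<Rightarrow> 'v \<Rightarrow>
    (('v, 'e) proidx \<times> ('v, 'e) proidx \<times> (nat \<Rightarrow> nat \<Rightarrow> bool)) set" where
  "pro_constraints V A s r =
     {(i, i, \<lambda>a _. src (fst i) a = fst (snd i) s \<and> rng (fst i) a = fst (snd i) r) | i. valid_idx V A i} \<union>
     {(k, i, \<lambda>a b. b = he a) | k i he. \<exists>hv. idx_hom V A k i hv he}"

lemma pro_elem_iff_constraints:
  "pro_elem V A (s, r, x) \<longleftrightarrow> s \<in> verts A \<and> r \<in> verts A \<and>
     x \<in> (\<Pi>\<^sub>E i\<in>{i. valid_idx V A i}. edges (fst i)) \<and> (\<forall>(k, i, R)\<in>pro_constraints V A s r. R (x k) (x i))"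
proof -
  have "x \<in> (\<Pi>\<^sub>E i\<in>{i. valid_idx V A i}. edges (fst i)) \<longleftrightarrow>
      (\<forall>i. \<not> valid_idx V A i \<longrightarrow> x i = undefined) \<and> (\<forall>i. valid_idx V A i \<longrightarrow> x i \<in> edges (fst i))"
    by (auto simp: PiE_iff extensional_def)
  moreover have "(\<forall>(k, i, R)\<in>pro_constraints V A s r. R (x k) (x i)) \<longleftrightarrow>
      (\<forall>i. valid_idx V A i \<longrightarrow> src (fst i) (x i) = fst (snd i) s \<and> rng (fst i) (x i) = fst (snd i) r) \<and>
      (\<forall>k i hv he. idx_hom V A k i hv he \<longrightarrow> x i = he (x k))"
    (is "?C \<longleftrightarrow> ?ends \<and> ?compat")
  proof (intro iffI conjI allI impI)
    assume C: ?C
    fix i assume "valid_idx V A i"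
    then have "(i, i, \<lambda>a _. src (fst i) a = fst (snd i) s \<and> rng (fst i) a = fst (snd i) r)
        \<in> pro_constraints V A s r" unfolding pro_constraints_def by blast
    from bspec[OF C this]
    show "src (fst i) (x i) = fst (snd i) s" "rng (fst i) (x i) = fst (snd i) r" by simp_all
  next
    assume C: ?C
    fix k i hv he assume "idx_hom V A k i hv he"
    then have "(k, i, \<lambda>a b. b = he a) \<in> pro_constraints V A s r" unfolding pro_constraints_def by blast
    from bspec[OF C this] show "x i = he (x k)" by simp
  next
    assume "?ends \<and> ?compat"
    then show ?C unfolding pro_constraints_def by (auto simp del: split_paired_All)
  qed
  ultimately show ?thesis unfolding pro_elem_iff by blast
qed

lemma pro_elem_compactness:
  assumes "pseudovariety V" "s \<in> verts A" "r \<in> verts A"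
    and "\<And>G. finite G \<Longrightarrow> G \<subseteq> {i. valid_idx V A i} \<Longrightarrow> \<exists>x. pro_elem V A (s, r, x) \<and> (\<forall>i\<in>G. P i (x i))"
  shows "\<exists>x. pro_elem V A (s, r, x) \<and> (\<forall>i. valid_idx V A i \<longrightarrow> P i (x i))"
proof -
  let ?I = "{i. valid_idx V A i}"
  let ?P = "{(i, i, \<lambda>a _. P i a) | i. valid_idx V A i}"
  have "\<exists>x\<in>(\<Pi>\<^sub>E i\<in>?I. edges (fst i)). \<forall>(k, i, R)\<in>pro_constraints V A s r \<union> ?P. R (x k) (x i)"
  proof (rule binary_constraints_compactness)
    fix i assume "i \<in> ?I"
    then show "finite (edges (fst i))"
      using pseudovariety_finite_sgd[OF assms(1)] unfolding valid_idx_iff finite_sgd_def by simp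
  next
    fix k i R assume "(k, i, R) \<in> pro_constraints V A s r \<union> ?P"
    then show "k \<in> ?I \<and> i \<in> ?I" unfolding pro_constraints_def idx_hom_def by auto
  next
    fix G assume G: "finite G" "G \<subseteq> pro_constraints V A s r \<union> ?P"
    let ?H = "fst ` (G - pro_constraints V A s r)"
    have "finite ?H" "?H \<subseteq> ?I" using G by auto
    then obtain x where x: "pro_elem V A (s, r, x)" "\<forall>i\<in>?H. P i (x i)" using assms(4) by blast
    have x_constraints: "\<forall>c\<in>pro_constraints V A s r. case c of (k, i, R) \<Rightarrow> R (x k) (x i)"
      and x_PiE: "x \<in> (\<Pi>\<^sub>E i\<in>?I. edges (fst i))"
      using x(1) unfolding pro_elem_iff_constraints by blast+
    have "R (x k) (x i)" if c: "(k, i, R) \<in> G" for k i R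
    proof (cases "(k, i, R) \<in> pro_constraints V A s r")
      case True
      from bspec[OF x_constraints True] show ?thesis by simp
    next
      case False
      then have "k \<in> ?H" "i = k" "R = (\<lambda>a _. P k a)" using c G(2) by force+
      then show ?thesis using x(2) by blast
    qed
    then show "\<exists>x\<in>(\<Pi>\<^sub>E i\<in>?I. edges (fst i)). \<forall>(k, i, R)\<in>G. R (x k) (x i)"
      using x_PiE by blast
  qed
  then obtain x where x: "x \<in> (\<Pi>\<^sub>E i\<in>?I. edges (fst i))"
    "\<forall>c\<in>pro_constraints V A s r \<union> ?P. case c of (k, i, R) \<Rightarrow> R (x k) (x i)"
    by blast
  have "pro_elem V A (s, r, x)" using x assms(2,3) unfolding pro_elem_iff_constraints by blast
  moreover have "P i (x i)" if "valid_idx V A i" for i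
    using bspec[OF x(2), of "(i, i, \<lambda>a _. P i a)"] that by blast
  ultimately show ?thesis by blast
qed

section \<open>Middle factors\<close>

text \<open>The candidates \<open>t : s \<rightarrow> r\<close> for the middle factor of \<open>u v = x y\<close> with \<open>u t = x\<close> and
  \<open>v = t y\<close>, tested at the single coordinate \<open>i\<close>.\<close>

definition overlaps_at ::
  "(nat, nat) sgd set \<Rightarrow> ('v, 'e, 'z) graph_scheme \<Rightarrow> 'v \<Rightarrow> 'v \<Rightarrow>
    ('v, 'e) profam \<Rightarrow> ('v, 'e) profam \<Rightarrow> ('v, 'e) profam \<Rightarrow> ('v, 'e) profam \<Rightarrow>
    ('v, 'e) proidx \<Rightarrow> ('v, 'e) profam set" where
  "overlaps_at V A s r Xu Xv Xx Xy i = {t. pro_elem V A (s, r, t) \<and>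
     gmult (fst i) (Xu i) (t i) = Xx i \<and> Xv i = gmult (fst i) (t i) (Xy i)}"

lemma overlaps_at_refines:
  assumes "idx_refines V A k i" "pro_elem V A (r, ru, Xu)" "pro_elem V A (sv, rv, Xv)"
    "pro_elem V A (sx, rx, Xx)" "pro_elem V A (sy, s, Xy)"
  shows "overlaps_at V A s r Xu Xv Xx Xy k \<subseteq> overlaps_at V A s r Xu Xv Xx Xy i"
proof
  fix t assume "t \<in> overlaps_at V A s r Xu Xv Xx Xy k"
  then have t: "pro_elem V A (s, r, t)" "gmult (fst k) (Xu k) (t k) = Xx k"
    "Xv k = gmult (fst k) (t k) (Xy k)"
    unfolding overlaps_at_def by auto
  obtain hv he where h: "idx_hom V A k i hv he" using assms(1) unfolding idx_refines_def by blast
  then have hom: "is_hom (fst k) (fst i) hv he" and k: "valid_idx V A k" unfolding idx_hom_def by auto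
  note edge = pro_elem_edge[OF _ k]
  have mult: "gmult (fst i) (he (Xu k)) (he (t k)) = he (gmult (fst k) (Xu k) (t k))"
    "gmult (fst i) (he (t k)) (he (Xy k)) = he (gmult (fst k) (t k) (Xy k))"
    using is_hom_gmult[OF hom] edge[OF assms(2)] edge[OF assms(5)] edge[OF t(1)] by simp_all
  have "Xu i = he (Xu k)" "Xv i = he (Xv k)" "Xx i = he (Xx k)" "Xy i = he (Xy k)" "t i = he (t k)"
    using pro_elem_idx_hom[OF _ h] assms(2-5) t(1) by blast+
  then show "t \<in> overlaps_at V A s r Xu Xv Xx Xy i"
    using t mult unfolding overlaps_at_def by simp
qed

lemma word_fam_overlaps_at:
  assumes "is_graph A" "valid_idx V A i" "a @ m \<in> edges (free_sgd A)" "m @ b \<in> edges (free_sgd A)"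
    "a \<noteq> []" "m \<noteq> []" "b \<noteq> []"
    "snd (snd i) a = Xu i" "snd (snd i) (m @ b) = Xv i" "snd (snd i) (a @ m) = Xx i" "snd (snd i) b = Xy i"
  shows "word_fam V A m \<in> overlaps_at V A (src A (last m)) (rng A (hd m)) Xu Xv Xx Xy i"
proof -
  have hom: "is_hom (free_sgd A) (fst i) (fst (snd i)) (snd (snd i))" using assms(2) unfolding valid_idx_iff by simp
  have "a \<in> edges (free_sgd A)" "m \<in> edges (free_sgd A)" "b \<in> edges (free_sgd A)"
    "src A (last a) = rng A (hd m)" "src A (last m) = rng A (hd b)"
    using assms(3-7) append_in_edges_free_sgd_iff by blast+
  then have "snd (snd i) (a @ m) = gmult (fst i) (snd (snd i) a) (snd (snd i) m)"
    "snd (snd i) (m @ b) = gmult (fst i) (snd (snd i) m) (snd (snd i) b)"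
    using is_hom_gmult[OF hom] by simp_all
  moreover have "pro_elem V A (src A (last m), rng A (hd m), word_fam V A m)"
    using pro_elem_word_fam[OF assms(1) \<open>m \<in> _\<close>] .
  ultimately show ?thesis
    using assms(2,8-11) unfolding overlaps_at_def word_fam_def by simp
qed

lemma overlaps_at_compactness:
  assumes "pseudovariety V" "s \<in> verts A" "r \<in> verts A"
    "\<forall>G. finite G \<longrightarrow> G \<subseteq> {i. valid_idx V A i} \<longrightarrow>
      (\<exists>t. pro_elem V A (s, r, t) \<and> (\<forall>i\<in>G. t \<in> overlaps_at V A s r Xu Xv Xx Xy i))"
  shows "\<exists>t. pro_elem V A (s, r, t) \<and> (\<forall>i. valid_idx V A i \<longrightarrow> t \<in> overlaps_at V A s r Xu Xv Xx Xy i)"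
proof -
  let ?P = "\<lambda>i a. gmult (fst i) (Xu i) a = Xx i \<and> Xv i = gmult (fst i) a (Xy i)"
  have "\<exists>t. pro_elem V A (s, r, t) \<and> (\<forall>i. valid_idx V A i \<longrightarrow> ?P i (t i))"
  proof (rule pro_elem_compactness[OF assms(1-3)])
    fix G assume "finite G" "G \<subseteq> {i. valid_idx V A i}"
    then obtain t where "pro_elem V A (s, r, t)" "\<forall>i\<in>G. t \<in> overlaps_at V A s r Xu Xv Xx Xy i"
      using assms(4) by auto
    then show "\<exists>t. pro_elem V A (s, r, t) \<and> (\<forall>i\<in>G. ?P i (t i))" unfolding overlaps_at_def by blast
  qed
  then obtain t where "pro_elem V A (s, r, t)" "\<forall>i. valid_idx V A i \<longrightarrow> ?P i (t i)" by blast
  then show ?thesis unfolding overlaps_at_def by blast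
qed

locale pro_equation =
  fixes V :: "(nat, nat) sgd set" and A :: "('v, 'e) graph"
    and su ru sv rv sx rx sy ry :: 'v and Xu Xv Xx Xy :: "('v, 'e) profam"
  assumes pseudovariety: "pseudovariety V" and concat_closed: "concat_closed V"
    and finite_graph: "finite_graph A"
    and u_elem: "pro_elem V A (su, ru, Xu)" and v_elem: "pro_elem V A (sv, rv, Xv)"
    and x_elem: "pro_elem V A (sx, rx, Xx)" and y_elem: "pro_elem V A (sy, ry, Xy)"
    and su_rv: "su = rv" and sx_ry: "sx = ry"
    and eq: "\<And>i. valid_idx V A i \<Longrightarrow> gmult (fst i) (Xu i) (Xv i) = gmult (fst i) (Xx i) (Xy i)"
begin

lemma graph_A: "is_graph A"
  using finite_graph unfolding finite_graph_def by simp

text \<open>This is where concatenation closure enters: the product of the fibres of \<open>u\<close> and \<open>v\<close> is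
  recognised at some index, and there the words chosen for \<open>x y\<close> and \<open>u v\<close> have the same value.\<close>

lemma concat_factor_words:
  assumes k: "separating_idx V A k"
  obtains a b wx wy where "a \<in> edges (free_sgd A)" "b \<in> edges (free_sgd A)"
    "wx \<in> edges (free_sgd A)" "wy \<in> edges (free_sgd A)" "a @ b = wx @ wy"
    "snd (snd k) a = Xu k" "snd (snd k) b = Xv k" "snd (snd k) wx = Xx k" "snd (snd k) wy = Xy k"
    "src A (last a) = su" "src A (last wx) = sx"
proof -
  have "valid_idx V A k" using k unfolding separating_idx_def by simp
  define L where "L = {w \<in> edges (free_sgd A). snd (snd k) w = Xu k}"
  define K where "K = {w \<in> edges (free_sgd A). snd (snd k) w = Xv k}"
  have "recognizable V A (concat A L K)"
    unfolding L_def K_def using concat_closed_recognizable[OF concat_closed finite_graph]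
      recognizable_fiber[OF \<open>valid_idx V A k\<close>] by blast
  then obtain T gv ge where j: "valid_idx V A (T, gv, ge)"
    and LK: "concat A L K = {w \<in> edges (free_sgd A). ge w \<in> ge ` concat A L K}"
    unfolding recognizable_def valid_idx_def by auto
  then have hom: "is_hom (free_sgd A) T gv ge" unfolding valid_idx_def by simp
  note word = separating_idx_common_word_rep[OF pseudovariety graph_A k j]
  obtain wu where wu: "wu \<in> edges (free_sgd A)" "snd (snd k) wu = Xu k" "ge wu = Xu (T, gv, ge)"
    "src A (last wu) = su" using word[OF u_elem] by auto
  obtain wv where wv: "wv \<in> edges (free_sgd A)" "snd (snd k) wv = Xv k" "ge wv = Xv (T, gv, ge)"
    "rng A (hd wv) = rv" using word[OF v_elem] by auto
  obtain wx where wx: "wx \<in> edges (free_sgd A)" "snd (snd k) wx = Xx k" "ge wx = Xx (T, gv, ge)"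
    "src A (last wx) = sx" using word[OF x_elem] by auto
  obtain wy where wy: "wy \<in> edges (free_sgd A)" "snd (snd k) wy = Xy k" "ge wy = Xy (T, gv, ge)"
    "rng A (hd wy) = ry" using word[OF y_elem] by auto
  have "wu @ wv \<in> concat A L K"
    unfolding concat_def L_def K_def using wu wv su_rv by force
  moreover have "ge (wx @ wy) = ge (wu @ wv)"
    using is_hom_gmult[OF hom] wu wv wx wy su_rv sx_ry eq[OF j] by simp
  moreover have "wx @ wy \<in> edges (free_sgd A)"
    using append_in_edges_free_sgd[OF wx(1) wy(1)] wx(4) wy(4) sx_ry by simp
  ultimately have "wx @ wy \<in> concat A L K" by (subst LK) (auto simp del: free_sgd_simps)
  then obtain a b where ab: "a @ b = wx @ wy" "a \<in> L" "b \<in> K" unfolding concat_def by auto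
  then have "src A (last a) = su"
    using separating_idx_word_ends(1)[OF graph_A k u_elem] unfolding L_def by blast
  then show ?thesis using that ab wx wy unfolding L_def K_def by blast
qed

lemma middle_factor_at:
  assumes k: "separating_idx V A k"
  shows "(Xu k = Xx k \<and> Xv k = Xy k) \<or> overlaps_at V A sx su Xu Xv Xx Xy k \<noteq> {} \<or>
    overlaps_at V A su sx Xx Xy Xu Xv k \<noteq> {}"
proof -
  have vk: "valid_idx V A k" using k unfolding separating_idx_def by simp
  obtain a b wx wy where w: "a \<in> edges (free_sgd A)" "b \<in> edges (free_sgd A)"
    "wx \<in> edges (free_sgd A)" "wy \<in> edges (free_sgd A)" "a @ b = wx @ wy"
    "snd (snd k) a = Xu k" "snd (snd k) b = Xv k" "snd (snd k) wx = Xx k" "snd (snd k) wy = Xy k"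
    "src A (last a) = su" "src A (last wx) = sx"
    using concat_factor_words[OF k] by blast
  have ne: "a \<noteq> []" "b \<noteq> []" "wx \<noteq> []" "wy \<noteq> []" using w(1-4) by (auto simp: edges_free_sgd_iff)
  obtain m where "a = wx @ m \<and> m @ b = wy \<or> a @ m = wx \<and> b = m @ wy"
    using w(5) append_eq_append_conv2 by blast
  then consider "m = []" | "m \<noteq> []" "a = wx @ m" "wy = m @ b" | "m \<noteq> []" "wx = a @ m" "b = m @ wy"
    by auto
  then show ?thesis
  proof cases
    case 1
    then show ?thesis using \<open>a = wx @ m \<and> _ \<or> _\<close> w by auto
  next
    case 2
    then have "src A (last m) = su" "rng A (hd m) = sx"
      using w(1,10,11) ne append_in_edges_free_sgd_iff[of wx m A] by auto
    then have "word_fam V A m \<in> overlaps_at V A su sx Xx Xy Xu Xv k"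
      using word_fam_overlaps_at[OF graph_A vk, of wx m b] 2 w ne by simp
    then show ?thesis by blast
  next
    case 3
    then have "src A (last m) = sx" "rng A (hd m) = su"
      using w(3,10,11) ne append_in_edges_free_sgd_iff[of a m A] by auto
    then have "word_fam V A m \<in> overlaps_at V A sx su Xu Xv Xx Xy k"
      using word_fam_overlaps_at[OF graph_A vk, of a m wy] 3 w ne by simp
    then show ?thesis by blast
  qed
qed

text \<open>If both families failed to have the finite intersection property, a common separating
  refinement of \<open>i0\<close> and of the finitely many failing indices would contradict \<open>middle_factor_at\<close>.\<close>

lemma middle_factor_fip:
  assumes i0: "valid_idx V A i0" "\<not> (Xu i0 = Xx i0 \<and> Xv i0 = Xy i0)"
  shows "(\<forall>G. finite G \<longrightarrow> G \<subseteq> {i. valid_idx V A i} \<longrightarrow>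
      (\<exists>t. pro_elem V A (sx, su, t) \<and> (\<forall>i\<in>G. t \<in> overlaps_at V A sx su Xu Xv Xx Xy i))) \<or>
    (\<forall>G. finite G \<longrightarrow> G \<subseteq> {i. valid_idx V A i} \<longrightarrow>
      (\<exists>t. pro_elem V A (su, sx, t) \<and> (\<forall>i\<in>G. t \<in> overlaps_at V A su sx Xx Xy Xu Xv i)))"
    (is "?F1 \<or> ?F2")
proof (rule ccontr)
  let ?I = "{i. valid_idx V A i}"
  let ?O1 = "overlaps_at V A sx su Xu Xv Xx Xy" and ?O2 = "overlaps_at V A su sx Xx Xy Xu Xv"
  assume "\<not> (?F1 \<or> ?F2)"
  then have "\<not> ?F1" "\<not> ?F2" by blast+
  then obtain G1 G2 where G: "finite G1" "G1 \<subseteq> ?I" "finite G2" "G2 \<subseteq> ?I"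
    and no1: "\<nexists>t. pro_elem V A (sx, su, t) \<and> (\<forall>i\<in>G1. t \<in> ?O1 i)"
    and no2: "\<nexists>t. pro_elem V A (su, sx, t) \<and> (\<forall>i\<in>G2. t \<in> ?O2 i)"
    by auto
  obtain k where k: "separating_idx V A k" "\<forall>i\<in>insert i0 (G1 \<union> G2). idx_refines V A k i"
    using exists_common_refinement[OF pseudovariety finite_graph, of "insert i0 (G1 \<union> G2)"] G i0(1)
    by auto
  note y_elem' = y_elem[folded sx_ry] and v_elem' = v_elem[folded su_rv]
  from middle_factor_at[OF k(1)] show False
  proof (elim disjE)
    assume "Xu k = Xx k \<and> Xv k = Xy k"
    moreover obtain hv he where "idx_hom V A k i0 hv he" using k(2) unfolding idx_refines_def by blast
    ultimately show False
      using i0(2) pro_elem_idx_hom[OF u_elem] pro_elem_idx_hom[OF v_elem] pro_elem_idx_hom[OF x_elem]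
        pro_elem_idx_hom[OF y_elem] by metis
  next
    assume "?O1 k \<noteq> {}"
    then obtain t where t: "t \<in> ?O1 k" by blast
    then have "pro_elem V A (sx, su, t)" unfolding overlaps_at_def by simp
    moreover have "\<forall>i\<in>G1. t \<in> ?O1 i" using overlaps_at_refines[OF _ u_elem v_elem x_elem y_elem'] k(2) t by blast
    ultimately show False using no1 by blast
  next
    assume "?O2 k \<noteq> {}"
    then obtain t where t: "t \<in> ?O2 k" by blast
    then have "pro_elem V A (su, sx, t)" unfolding overlaps_at_def by simp
    moreover have "\<forall>i\<in>G2. t \<in> ?O2 i" using overlaps_at_refines[OF _ x_elem y_elem u_elem v_elem'] k(2) t by blast
    ultimately show False using no2 by blast
  qed
qed

lemma middle_factor:
  "(Xu = Xx \<and> Xv = Xy) \<or>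
   (\<exists>t. pro_elem V A (sx, su, t) \<and> (\<forall>i. valid_idx V A i \<longrightarrow> t \<in> overlaps_at V A sx su Xu Xv Xx Xy i)) \<or>
   (\<exists>t. pro_elem V A (su, sx, t) \<and> (\<forall>i. valid_idx V A i \<longrightarrow> t \<in> overlaps_at V A su sx Xx Xy Xu Xv i))"
proof (cases "\<forall>i. valid_idx V A i \<longrightarrow> Xu i = Xx i \<and> Xv i = Xy i")
  case True
  then have "Xu = Xx" "Xv = Xy"
    using pro_elem_undefined[OF u_elem] pro_elem_undefined[OF v_elem] pro_elem_undefined[OF x_elem]
      pro_elem_undefined[OF y_elem] by (metis ext)+
  then show ?thesis by blast
next
  case False
  then obtain i0 where "valid_idx V A i0" "\<not> (Xu i0 = Xx i0 \<and> Xv i0 = Xy i0)" by blast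
  from middle_factor_fip[OF this] show ?thesis
  proof (elim disjE)
    assume "\<forall>G. finite G \<longrightarrow> G \<subseteq> {i. valid_idx V A i} \<longrightarrow>
      (\<exists>t. pro_elem V A (sx, su, t) \<and> (\<forall>i\<in>G. t \<in> overlaps_at V A sx su Xu Xv Xx Xy i))"
    from overlaps_at_compactness[OF pseudovariety pro_elem_verts(1)[OF x_elem] pro_elem_verts(1)[OF u_elem] this]
    show ?thesis by blast
  next
    assume "\<forall>G. finite G \<longrightarrow> G \<subseteq> {i. valid_idx V A i} \<longrightarrow>
      (\<exists>t. pro_elem V A (su, sx, t) \<and> (\<forall>i\<in>G. t \<in> overlaps_at V A su sx Xx Xy Xu Xv i))"
    from overlaps_at_compactness[OF pseudovariety pro_elem_verts(1)[OF u_elem] pro_elem_verts(1)[OF x_elem] this]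
    show ?thesis by blast
  qed
qed

end

lemma sgd_I_simps [simp]:
  "edges (sgd_I S) = Inl ` edges S \<union> Inr ` verts S"
  "src (sgd_I S) (Inl e) = src S e" "src (sgd_I S) (Inr v) = v"
  "rng (sgd_I S) (Inl e) = rng S e" "rng (sgd_I S) (Inr v) = v"
  "gmult (sgd_I S) (Inl a) (Inl b) = Inl (gmult S a b)"
  "gmult (sgd_I S) (Inl a) (Inr v) = Inl a"
  "gmult (sgd_I S) (Inr v) z = z"
  by (simp_all add: sgd_I_def)

lemma equidivisibleI:
  assumes "\<And>u. u \<in> edges S \<Longrightarrow> src S u \<in> verts S"
    and "\<And>u v x y. u \<in> edges S \<Longrightarrow> v \<in> edges S \<Longrightarrow> x \<in> edges S \<Longrightarrow> y \<in> edges S \<Longrightarrow>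
      src S u = rng S v \<Longrightarrow> src S x = rng S y \<Longrightarrow> gmult S u v = gmult S x y \<Longrightarrow>
      (u = x \<and> v = y) \<or>
      (\<exists>t\<in>edges S. src S u = rng S t \<and> gmult S u t = x \<and> src S t = rng S y \<and> v = gmult S t y) \<or>
      (\<exists>t\<in>edges S. src S x = rng S t \<and> gmult S x t = u \<and> src S t = rng S v \<and> y = gmult S t v)"
  shows "equidivisible S"
  unfolding equidivisible_def
proof (intro ballI impI, elim conjE)
  fix u v x y assume uvxy: "u \<in> edges S" "v \<in> edges S" "x \<in> edges S" "y \<in> edges S"
    and eqs: "src S u = rng S v" "src S x = rng S y" "gmult S u v = gmult S x y"
  from assms(2)[OF uvxy eqs] show "\<exists>t\<in>edges (sgd_I S).
    src (sgd_I S) (Inl u) = rng (sgd_I S) t \<and> gmult (sgd_I S) (Inl u) t = Inl x \<and>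
      src (sgd_I S) t = rng (sgd_I S) (Inl y) \<and> Inl v = gmult (sgd_I S) t (Inl y) \<or>
    src (sgd_I S) (Inl x) = rng (sgd_I S) t \<and> gmult (sgd_I S) (Inl x) t = Inl u \<and>
      src (sgd_I S) t = rng (sgd_I S) (Inl v) \<and> Inl y = gmult (sgd_I S) t (Inl v)"
  proof (elim disjE bexE conjE)
    assume "u = x" "v = y"
    then show ?thesis using assms(1)[OF uvxy(1)] eqs(2) by (intro bexI[of _ "Inr (src S u)"]) auto
  next
    fix t assume "t \<in> edges S" "src S u = rng S t" "gmult S u t = x" "src S t = rng S y" "v = gmult S t y"
    then show ?thesis by (intro bexI[of _ "Inl t"]) auto
  next
    fix t assume "t \<in> edges S" "src S x = rng S t" "gmult S x t = u" "src S t = rng S v" "y = gmult S t v"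
    then show ?thesis by (intro bexI[of _ "Inl t"]) auto
  qed
qed

lemma free_pro_simps [simp]:
  "verts (free_pro V A) = verts A" "edges (free_pro V A) = {p. pro_elem V A p}"
  "src (free_pro V A) (s, r, X) = s" "rng (free_pro V A) (s, r, X) = r"
  "gmult (free_pro V A) (s, r, X) (s', r', Y) =
     (s', r, \<lambda>i. if valid_idx V A i then gmult (fst i) (X i) (Y i) else undefined)"
  by (simp_all add: free_pro_def)

lemma free_pro_gmult_eq_iff:
  assumes "pro_elem V A (s', r', Z)"
  shows "gmult (free_pro V A) (s, r, X) (s'', r'', Y) = (s', r', Z) \<longleftrightarrow>
    s'' = s' \<and> r = r' \<and> (\<forall>i. valid_idx V A i \<longrightarrow> gmult (fst i) (X i) (Y i) = Z i)"
  using pro_elem_undefined[OF assms] by (auto simp: fun_eq_iff)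

lemma pro_elem_endpoints_unique:
  assumes "pseudovariety V" "finite_graph A" "pro_elem V A (s, r, X)" "pro_elem V A (s', r', X)"
  shows "s = s' \<and> r = r'"
proof -
  obtain k where k: "valid_idx V A k" "inj_on (fst (snd k)) (verts A)"
    using exists_separating_idx[OF assms(1,2)] unfolding separating_idx_def by blast
  then have "fst (snd k) s = fst (snd k) s'" "fst (snd k) r = fst (snd k) r'"
    using pro_elem_edge(2,3)[OF assms(3) k(1)] pro_elem_edge(2,3)[OF assms(4) k(1)] by simp_all
  then show ?thesis
    using k(2) pro_elem_verts[OF assms(3)] pro_elem_verts[OF assms(4)] by (auto dest: inj_onD)
qed

lemma free_pro_equidivisible_cases:
  fixes A :: "('v, 'e) graph"
  assumes V: "pseudovariety V" "concat_closed V" and A: "finite_graph A"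
    and edges: "u \<in> edges (free_pro V A)" "v \<in> edges (free_pro V A)"
      "x \<in> edges (free_pro V A)" "y \<in> edges (free_pro V A)"
    and uv: "src (free_pro V A) u = rng (free_pro V A) v"
    and xy: "src (free_pro V A) x = rng (free_pro V A) y"
    and eq: "gmult (free_pro V A) u v = gmult (free_pro V A) x y"
  shows "(u = x \<and> v = y) \<or>
    (\<exists>t\<in>edges (free_pro V A). src (free_pro V A) u = rng (free_pro V A) t \<and>
      gmult (free_pro V A) u t = x \<and> src (free_pro V A) t = rng (free_pro V A) y \<and> v = gmult (free_pro V A) t y) \<or>
    (\<exists>t\<in>edges (free_pro V A). src (free_pro V A) x = rng (free_pro V A) t \<and>
      gmult (free_pro V A) x t = u \<and> src (free_pro V A) t = rng (free_pro V A) v \<and> y = gmult (free_pro V A) t v)"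
proof -
  obtain su ru Xu sv rv Xv sx rx Xx sy ry Xy
    where uvxy: "u = (su, ru, Xu)" "v = (sv, rv, Xv)" "x = (sx, rx, Xx)" "y = (sy, ry, Xy)"
    by (cases u, cases v, cases x, cases y) auto
  have pro: "pro_elem V A (su, ru, Xu)" "pro_elem V A (sv, rv, Xv)"
    "pro_elem V A (sx, rx, Xx)" "pro_elem V A (sy, ry, Xy)"
    using edges uvxy by simp_all
  have prods: "(sv, ru, \<lambda>i. if valid_idx V A i then gmult (fst i) (Xu i) (Xv i) else undefined) =
      (sy, rx, \<lambda>i. if valid_idx V A i then gmult (fst i) (Xx i) (Xy i) else undefined)"
    using eq uvxy by simp
  then have "sv = sy" "ru = rx" by simp_all
  have prod_eq: "gmult (fst i) (Xu i) (Xv i) = gmult (fst i) (Xx i) (Xy i)" if "valid_idx V A i" for i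
    using fun_cong[OF arg_cong[where f = "\<lambda>p. snd (snd p)", OF prods], of i] that by simp
  interpret pro_equation V A su ru sv rv sx rx sy ry Xu Xv Xx Xy
    using V A pro uv xy prod_eq uvxy by unfold_locales simp_all
  note endpoints = pro_elem_endpoints_unique[OF V(1) A]
  from middle_factor show ?thesis
  proof (elim disjE exE conjE)
    assume "Xu = Xx" "Xv = Xy"
    then show ?thesis using endpoints[OF u_elem] endpoints[OF v_elem] x_elem y_elem uvxy by auto
  next
    fix t assume t: "pro_elem V A (sx, su, t)"
      "\<forall>i. valid_idx V A i \<longrightarrow> t \<in> overlaps_at V A sx su Xu Xv Xx Xy i"
    then have "gmult (free_pro V A) u (sx, su, t) = x" "gmult (free_pro V A) (sx, su, t) y = v"
      unfolding uvxy free_pro_gmult_eq_iff[OF x_elem] free_pro_gmult_eq_iff[OF v_elem] overlaps_at_def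
      using su_rv \<open>sv = sy\<close> \<open>ru = rx\<close> by (auto simp del: split_paired_All)
    then show ?thesis using t(1) uvxy sx_ry by auto
  next
    fix t assume t: "pro_elem V A (su, sx, t)"
      "\<forall>i. valid_idx V A i \<longrightarrow> t \<in> overlaps_at V A su sx Xx Xy Xu Xv i"
    then have "gmult (free_pro V A) x (su, sx, t) = u" "gmult (free_pro V A) (su, sx, t) v = y"
      unfolding uvxy free_pro_gmult_eq_iff[OF u_elem] free_pro_gmult_eq_iff[OF y_elem] overlaps_at_def
      using sx_ry \<open>sv = sy\<close> \<open>ru = rx\<close> by (auto simp del: split_paired_All)
    then show ?thesis using t(1) uvxy su_rv by auto
  qed
qed

theorem mainTheorem12:
  fixes V :: "(nat, nat) sgd set"
  assumes "pseudovariety V"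
    and "concat_closed V"
  shows "\<forall>A :: ('v, 'e) graph. finite_graph A \<longrightarrow> equidivisible (free_pro V A)"
proof (intro allI impI equidivisibleI)
  fix A :: "('v, 'e) graph" and u
  assume "u \<in> edges (free_pro V A)"
  then show "src (free_pro V A) u \<in> verts (free_pro V A)"
    using pro_elem_verts(1) by (cases u) auto
qed (use assms free_pro_equidivisible_cases in blast)

end
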